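(* Fix $t>0$ and $\alpha\ge 0$. For every $\phi\in C([0,t];\mathbb{R})$: (1) $\mathcal{T}(T_\alpha(\phi))(s)=\mathbb{T}_{\log\{e^{2\phi_t}/(1+\alpha A_t(\phi))\}}(\phi)(s)$ for $0\le s\le t$; (2) $T_\alpha(\mathcal{T}(\phi))(s)=\mathbb{T}_{\log\{e^{2\phi_t}+\alpha A_t(\phi)\}}(\phi)(s)$ for $0\le s\le t$.
   Context: For $\phi\in C([0,t];\mathbb{R})$ let $A_s(\phi)=\int_0^s e^{2\phi_u}\,du$. For $z\in\mathbb{R}$, $\mathbb{T}_z(\phi)(s)=\phi_s-\log\{1+\frac{A_s(\phi)}{A_t(\phi)}(e^z-1)\}$, $0\le s\le t$; $\mathcal{T}(\phi)(s)=\mathbb{T}_{2\phi_t}(\phi)(s)$; and $T_\alpha(\phi)(s)=\phi_s-\log\{1+\alpha A_s(\phi)\}$, $0\le s\le t$. *)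

theory Defs
  imports "HOL-Analysis.Analysis"
begin

text \<open>Paths phi in C([0,t];R) are modelled as functions real => real, continuous on {0..t};
  only their values on [0,t] matter.\<close>

definition A :: "(real \<Rightarrow> real) \<Rightarrow> real \<Rightarrow> real" where
  "A \<phi> s = integral {0..s} (\<lambda>u. exp (2 * \<phi> u))"

definition TT :: "real \<Rightarrow> real \<Rightarrow> (real \<Rightarrow> real) \<Rightarrow> real \<Rightarrow> real" where
  "TT t z \<phi> s = \<phi> s - ln (1 + A \<phi> s / A \<phi> t * (exp z - 1))"

definition Tcal :: "real \<Rightarrow> (real \<Rightarrow> real) \<Rightarrow> real \<Rightarrow> real" where
  "Tcal t \<phi> = TT t (2 * \<phi> t) \<phi>"

definition Talpha :: "real \<Rightarrow> (real \<Rightarrow> real) \<Rightarrow> real \<Rightarrow> real" where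
  "Talpha \<alpha> \<phi> s = \<phi> s - ln (1 + \<alpha> * A \<phi> s)"

end

theory Submission
  imports Defs
begin

text \<open>Both \<open>\<T>\<^sub>z\<close> and \<open>T\<^sub>\<alpha>\<close> belong to the family \<open>T\<^sub>c \<phi> = \<phi> - log (1 + c A(\<phi>))\<close>,
  with \<open>c = (e\<^sup>z - 1) / A\<^sub>t(\<phi>)\<close> for \<open>\<T>\<^sub>z\<close>. Since \<open>A'(\<phi>) = e\<^sup>2\<^sup>\<phi>\<close>, the fundamental
  theorem of calculus gives \<open>A(T\<^sub>c \<phi>) = A(\<phi>) / (1 + c A(\<phi>))\<close>, and hence
  \<open>T\<^sub>d \<circ> T\<^sub>c = T\<^sub>c\<^sub>+\<^sub>d\<close> wherever the logarithms are defined. Both identities then reduce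
  to computing the sum of two coefficients.\<close>

lemma continuous_on_exp_double:
  "continuous_on S \<phi> \<Longrightarrow> continuous_on S (\<lambda>u. exp (2 * \<phi> u :: real))"
  by (intro continuous_intros)

lemma exp_double_diff_ln:
  fixes x p :: real
  assumes "p > 0"
  shows "exp (2 * (x - ln p)) = exp (2 * x) / p\<^sup>2"
proof -
  have "exp (2 * (x - ln p)) = exp (2 * x) / exp (ln p) ^ 2"
    by (simp add: exp_diff right_diff_distrib power2_eq_square exp_add[symmetric])
  then show ?thesis using assms by simp
qed

lemma A_nonneg:
  assumes "continuous_on {0..s} \<phi>"
  shows "A \<phi> s \<ge> 0"
  unfolding A_def
  by (intro integral_nonneg integrable_continuous_interval continuous_on_exp_double assms) auto

lemma A_mono:
  assumes "continuous_on {0..t} \<phi>" "s \<le> t"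
  shows "A \<phi> s \<le> A \<phi> t"
  unfolding A_def
proof (rule integral_subset_le)
  show "(\<lambda>u. exp (2 * \<phi> u)) integrable_on {0..t}"
    by (intro integrable_continuous_interval continuous_on_exp_double assms)
  then show "(\<lambda>u. exp (2 * \<phi> u)) integrable_on {0..s}"
    by (rule integrable_on_subinterval) (use assms in auto)
qed (use assms in auto)

lemma A_pos:
  assumes "continuous_on {0..t} \<phi>" "t > 0"
  shows "A \<phi> t > 0"
proof -
  have "A \<phi> t \<noteq> 0"
  proof
    assume "A \<phi> t = 0"
    then have "\<forall>u\<in>cbox 0 t. exp (2 * \<phi> u) = 0"
      using integral_cbox_eq_0_iff[of 0 t "\<lambda>u. exp (2 * \<phi> u)"]
        continuous_on_exp_double[OF assms(1)] assms(2)
      by (auto simp: A_def)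
    then show False using assms(2) by auto
  qed
  then show ?thesis using A_nonneg[OF assms(1)] by simp
qed

lemma A_has_real_derivative:
  assumes "continuous_on {0..s} \<phi>" "x \<in> {0..s}"
  shows "(A \<phi> has_real_derivative exp (2 * \<phi> x)) (at x within {0..s})"
  using integral_has_vector_derivative[OF continuous_on_exp_double[OF assms(1)] assms(2)]
  unfolding A_def has_real_derivative_iff_has_vector_derivative .

lemma A_Talpha:
  assumes "0 \<le> s" and cont: "continuous_on {0..s} \<phi>"
    and pos: "\<forall>u\<in>{0..s}. 1 + c * A \<phi> u > 0"
  shows "A (Talpha c \<phi>) s = A \<phi> s / (1 + c * A \<phi> s)"
proof -
  define F where "F x = A \<phi> x / (1 + c * A \<phi> x)" for x
  have "(F has_real_derivative exp (2 * Talpha c \<phi> x)) (at x within {0..s})"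
    if x: "x \<in> {0..s}" for x
  proof -
    have p: "1 + c * A \<phi> x > 0" using pos x by blast
    have dA: "(A \<phi> has_real_derivative exp (2 * \<phi> x)) (at x within {0..s})"
      using cont x by (rule A_has_real_derivative)
    have "((\<lambda>y. 1 + c * A \<phi> y) has_real_derivative 0 + c * exp (2 * \<phi> x)) (at x within {0..s})"
      by (intro DERIV_add DERIV_cmult DERIV_const dA)
    from DERIV_divide[OF dA this] p
    have "(F has_real_derivative
            (exp (2 * \<phi> x) * (1 + c * A \<phi> x) - A \<phi> x * (c * exp (2 * \<phi> x)))
            / (1 + c * A \<phi> x)\<^sup>2) (at x within {0..s})"
      unfolding F_def power2_eq_square by simp
    moreover have "exp (2 * Talpha c \<phi> x) = exp (2 * \<phi> x) / (1 + c * A \<phi> x)\<^sup>2"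
      unfolding Talpha_def using p by (rule exp_double_diff_ln)
    ultimately show ?thesis by (simp add: algebra_simps)
  qed
  then have "((\<lambda>u. exp (2 * Talpha c \<phi> u)) has_integral F s - F 0) {0..s}"
    using \<open>0 \<le> s\<close>
    by (intro fundamental_theorem_of_calculus) (auto simp: has_real_derivative_iff_has_vector_derivative)
  moreover have "F 0 = 0" by (simp add: F_def A_def)
  ultimately show ?thesis
    unfolding F_def by (subst A_def) (simp add: integral_unique)
qed

lemma Talpha_Talpha:
  assumes "0 \<le> s" "continuous_on {0..s} \<phi>"
    and pos: "\<forall>u\<in>{0..s}. 1 + \<alpha> * A \<phi> u > 0" and pos_sum: "1 + (\<alpha> + \<beta>) * A \<phi> s > 0"
  shows "Talpha \<beta> (Talpha \<alpha> \<phi>) s = Talpha (\<alpha> + \<beta>) \<phi> s"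
proof -
  define a where "a = A \<phi> s"
  have p: "1 + \<alpha> * a > 0" using pos \<open>0 \<le> s\<close> by (simp add: a_def)
  have q: "1 + (\<alpha> + \<beta>) * a > 0" using pos_sum by (simp add: a_def)
  have split: "1 + \<beta> * (a / (1 + \<alpha> * a)) = (1 + (\<alpha> + \<beta>) * a) / (1 + \<alpha> * a)"
    using p by (simp add: field_simps)
  have "Talpha \<beta> (Talpha \<alpha> \<phi>) s = \<phi> s - ln (1 + \<alpha> * a) - ln (1 + \<beta> * (a / (1 + \<alpha> * a)))"
    using A_Talpha[OF assms(1-3)] by (simp add: Talpha_def a_def)
  also have "\<dots> = \<phi> s - ln (1 + (\<alpha> + \<beta>) * a)"
    using p q by (simp only: split ln_div) simp
  finally show ?thesis by (simp add: Talpha_def a_def)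
qed

lemma TT_eq_Talpha: "TT t z \<phi> = Talpha ((exp z - 1) / A \<phi> t) \<phi>"
  by (rule ext) (simp add: TT_def Talpha_def mult.commute)

lemma one_plus_TT_coeff_pos:
  assumes "continuous_on {0..t} \<phi>" "t > 0" "u \<in> {0..t}"
  shows "1 + (exp z - 1) / A \<phi> t * A \<phi> u > 0"
proof -
  define x where "x = A \<phi> u / A \<phi> t"
  have "A \<phi> t > 0" using A_pos[OF assms(1,2)] .
  moreover have "0 \<le> A \<phi> u" "A \<phi> u \<le> A \<phi> t"
    using assms by (auto intro!: A_nonneg A_mono elim!: continuous_on_subset)
  ultimately have "0 \<le> x" "x \<le> 1" by (auto simp: x_def)
  then have "0 < (1 - x) + x * exp z"
    by (cases "x = 1") (auto intro: add_pos_nonneg add_nonneg_pos)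
  also have "\<dots> = 1 + (exp z - 1) / A \<phi> t * A \<phi> u"
    by (simp add: x_def algebra_simps diff_divide_distrib)
  finally show ?thesis .
qed

lemma Tcal_Talpha:
  assumes "t > 0" "\<alpha> \<ge> 0" and cont: "continuous_on {0..t} \<phi>" and s: "s \<in> {0..t}"
  shows "Tcal t (Talpha \<alpha> \<phi>) s = TT t (ln (exp (2 * \<phi> t) / (1 + \<alpha> * A \<phi> t))) \<phi> s"
proof -
  define b where "b = A \<phi> t"
  define q where "q = 1 + \<alpha> * b"
  define z where "z = ln (exp (2 * \<phi> t) / q)"
  define c where "c = (exp (2 * Talpha \<alpha> \<phi> t) - 1) / A (Talpha \<alpha> \<phi>) t"
  have b: "b > 0" using A_pos[OF cont \<open>t > 0\<close>] by (simp add: b_def)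
  have pos: "\<forall>u\<in>{0..t}. 1 + \<alpha> * A \<phi> u > 0"
    using \<open>\<alpha> \<ge> 0\<close> by (auto intro!: add_pos_nonneg mult_nonneg_nonneg A_nonneg
        continuous_on_subset[OF cont])
  then have q: "q > 0" using \<open>t > 0\<close> by (simp add: q_def b_def)
  have At: "A (Talpha \<alpha> \<phi>) t = b / q"
    using A_Talpha[of t \<phi> \<alpha>] \<open>t > 0\<close> cont pos by (simp add: b_def q_def)
  have Et: "exp (2 * Talpha \<alpha> \<phi> t) = exp (2 * \<phi> t) / q\<^sup>2"
    using q unfolding Talpha_def q_def b_def by (rule exp_double_diff_ln)
  have "\<alpha> + c = (exp (2 * \<phi> t) / q - q + \<alpha> * b) / b"
    unfolding c_def At Et using b q by (simp add: field_simps power2_eq_square)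
  also have "\<dots> = (exp z - 1) / b"
    using q by (simp add: z_def q_def)
  finally have coeff: "\<alpha> + c = (exp z - 1) / b" .
  have "Tcal t (Talpha \<alpha> \<phi>) s = Talpha c (Talpha \<alpha> \<phi>) s"
    by (simp add: Tcal_def TT_eq_Talpha c_def)
  also have "\<dots> = Talpha (\<alpha> + c) \<phi> s"
  proof (rule Talpha_Talpha)
    show "1 + (\<alpha> + c) * A \<phi> s > 0"
      using one_plus_TT_coeff_pos[OF cont \<open>t > 0\<close> s] by (simp add: coeff b_def)
  qed (use s pos in \<open>auto intro: continuous_on_subset[OF cont]\<close>)
  also have "\<dots> = TT t z \<phi> s"
    by (simp add: coeff TT_eq_Talpha b_def)
  finally show ?thesis by (simp add: z_def q_def b_def)
qed

lemma Talpha_Tcal: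
  assumes "t > 0" "\<alpha> \<ge> 0" and cont: "continuous_on {0..t} \<phi>" and s: "s \<in> {0..t}"
  shows "Talpha \<alpha> (Tcal t \<phi>) s = TT t (ln (exp (2 * \<phi> t) + \<alpha> * A \<phi> t)) \<phi> s"
proof -
  define b where "b = A \<phi> t"
  define z where "z = ln (exp (2 * \<phi> t) + \<alpha> * b)"
  define c where "c = (exp (2 * \<phi> t) - 1) / b"
  have b: "b > 0" using A_pos[OF cont \<open>t > 0\<close>] by (simp add: b_def)
  have "exp (2 * \<phi> t) + \<alpha> * b > 0"
    using b \<open>\<alpha> \<ge> 0\<close> by (simp add: add_pos_nonneg)
  then have coeff: "c + \<alpha> = (exp z - 1) / b"
    using b by (simp add: c_def z_def field_simps)
  have "Talpha \<alpha> (Tcal t \<phi>) s = Talpha \<alpha> (Talpha c \<phi>) s"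
    by (simp add: Tcal_def TT_eq_Talpha c_def b_def)
  also have "\<dots> = Talpha (c + \<alpha>) \<phi> s"
  proof (rule Talpha_Talpha)
    show "\<forall>u\<in>{0..s}. 1 + c * A \<phi> u > 0"
      using s one_plus_TT_coeff_pos[OF cont \<open>t > 0\<close>] by (simp add: c_def b_def)
    show "1 + (c + \<alpha>) * A \<phi> s > 0"
      using one_plus_TT_coeff_pos[OF cont \<open>t > 0\<close> s] by (simp add: coeff b_def)
  qed (use s in \<open>auto intro: continuous_on_subset[OF cont]\<close>)
  also have "\<dots> = TT t z \<phi> s"
    by (simp add: coeff TT_eq_Talpha b_def)
  finally show ?thesis by (simp add: z_def b_def)
qed

theorem lemma4p1:
  fixes t \<alpha> :: real and \<phi> :: "real \<Rightarrow> real"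
  assumes "t > 0" and "\<alpha> \<ge> 0" and "continuous_on {0..t} \<phi>"
  shows "(\<forall>s\<in>{0..t}. Tcal t (Talpha \<alpha> \<phi>) s
            = TT t (ln (exp (2 * \<phi> t) / (1 + \<alpha> * A \<phi> t))) \<phi> s)
       \<and> (\<forall>s\<in>{0..t}. Talpha \<alpha> (Tcal t \<phi>) s
            = TT t (ln (exp (2 * \<phi> t) + \<alpha> * A \<phi> t)) \<phi> s)"
  using Tcal_Talpha[OF assms] Talpha_Tcal[OF assms] by blast

end
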